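(* Let $G=(\mathcal{V},\mathcal{E})$ be a simple connected graph and $\mathcal{R}\subseteq\mathcal{V}$ a resolution set of $G$. If a pair $\{i,j\}$ of distinct nodes is invisible with respect to $\mathcal{R}$, then $i\notin\mathcal{R}$, $j\notin\mathcal{R}$, and $\Delta_{ij}=1$. Likewise, if $\{i,j\}$ is ambiguous with respect to $\mathbf{P}_{\mathcal{R}}$, then $i\notin\mathcal{R}$, $j\notin\mathcal{R}$ and $\Delta_{ij}=1$ (computed from $\mathbf{P}_{\mathcal{R}}$).
   Context: All graphs are simple, undirected and connected. $h_{ij}$ is the shortest-path distance between nodes $i,j$. For an ordered landmark set $\mathcal{M}=\{A_1,\dots,A_m\}\subseteq\mathcal{V}$, $\mathbf{P}_{\mathcal{M}}(i)=\langle h_{iA_1},\dots,h_{iA_m}\rangle$, and $\mathbf{P}_{\mathcal{M}}$ is the matrix with these rows. $\mathcal{M}$ is a resolution set if the $\mathbf{P}_{\mathcal{M}}(i)$ are pairwise distinct. For nodes $i,j$ define $\Delta^k_{ij}=|h_{iA_k}-h_{jA_k}|$ and $\Delta_{ij}=\max_{1\le k\le m}\Delta^k_{ij}$. A pair $\{i,j\}$ is invisible with respect to $\mathcal{M}$ if adding the edge $\{i,j\}$ (when absent) or removing it (when present) does not change any entry of $\mathbf{P}_{\mathcal{M}}$. A pair $\{i,j\}$ is ambiguous with respect to a given matrix $\mathbf{P}_{\mathcal{M}}$ if there exist two simple connected graphs on $\mathcal{V}$, both having distance vector matrix $\mathbf{P}_{\mathcal{M}}$ for $\mathcal{M}$,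 such that $\{i,j\}$ is an edge of one and not of the other. *)

theory Defs
  imports Main "HOL-Library.Extended_Nat"
begin

definition simple_graph :: "'a set \<Rightarrow> 'a set set \<Rightarrow> bool" where
  "simple_graph V E \<longleftrightarrow> finite V \<and>
     (\<forall>e\<in>E. \<exists>u v. u \<noteq> v \<and> u \<in> V \<and> v \<in> V \<and> e = {u, v})"

definition adj_rel :: "'a set set \<Rightarrow> ('a \<times> 'a) set" where
  "adj_rel E = {(u, v). {u, v} \<in> E}"

definition walk_len :: "'a set set \<Rightarrow> 'a \<Rightarrow> 'a \<Rightarrow> nat \<Rightarrow> bool" where
  "walk_len E u v n \<longleftrightarrow> (u, v) \<in> adj_rel E ^^ n"

definition connected_graph :: "'a set \<Rightarrow> 'a set set \<Rightarrow> bool" where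
  "connected_graph V E \<longleftrightarrow> simple_graph V E \<and> V \<noteq> {} \<and>
     (\<forall>u\<in>V. \<forall>v\<in>V. \<exists>n. walk_len E u v n)"

(* shortest-path distance h_uv (meaningful when u, v are connected) *)
definition dist :: "'a set set \<Rightarrow> 'a \<Rightarrow> 'a \<Rightarrow> nat" where
  "dist E u v = (LEAST n. walk_len E u v n)"

definition edist :: "'a set set \<Rightarrow> 'a \<Rightarrow> 'a \<Rightarrow> enat" where
  "edist E u v = (if \<exists>n. walk_len E u v n then enat (dist E u v) else \<infinity>)"

definition dvec :: "'a set set \<Rightarrow> 'a set \<Rightarrow> 'a \<Rightarrow> 'a \<Rightarrow> nat" where
  "dvec E M i = (\<lambda>A. if A \<in> M then dist E i A else 0)"

definition resolution_set :: "'a set \<Rightarrow> 'a set set \<Rightarrow> 'a set \<Rightarrow> bool" where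
  "resolution_set V E M \<longleftrightarrow> M \<subseteq> V \<and> inj_on (dvec E M) V"

definition Delta :: "'a set set \<Rightarrow> 'a set \<Rightarrow> 'a \<Rightarrow> 'a \<Rightarrow> nat" where
  "Delta E M i j = Max ((\<lambda>A. nat \<bar>int (dist E i A) - int (dist E j A)\<bar>) ` M)"

definition toggle :: "'a set set \<Rightarrow> 'a \<Rightarrow> 'a \<Rightarrow> 'a set set" where
  "toggle E i j = (if {i, j} \<in> E then E - {{i, j}} else insert {i, j} E)"

(* toggling {i,j} changes no entry of P_M (distances may become infinite) *)
definition invisible :: "'a set \<Rightarrow> 'a set set \<Rightarrow> 'a set \<Rightarrow> 'a \<Rightarrow> 'a \<Rightarrow> bool" where
  "invisible V E M i j \<longleftrightarrow>
     (\<forall>x\<in>V. \<forall>A\<in>M. edist (toggle E i j) x A = edist E x A)"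

definition ambiguous :: "'a set \<Rightarrow> 'a set set \<Rightarrow> 'a set \<Rightarrow> 'a \<Rightarrow> 'a \<Rightarrow> bool" where
  "ambiguous V E M i j \<longleftrightarrow>
     (\<exists>E1 E2. connected_graph V E1 \<and> connected_graph V E2 \<and>
        (\<forall>x\<in>V. \<forall>A\<in>M. dist E1 x A = dist E x A) \<and>
        (\<forall>x\<in>V. \<forall>A\<in>M. dist E2 x A = dist E x A) \<and>
        {i, j} \<in> E1 \<and> {i, j} \<notin> E2)"

end

theory Submission
  imports Defs
begin

text \<open>Both notions provide two graphs on \<open>V\<close> that have the same (possibly infinite) distances
  from every node to every landmark, but differ on the pair \<open>{i, j}\<close>: for invisibility \<open>E\<close> and
  \<open>toggle E i j\<close>, for ambiguity the two witnesses. If \<open>j\<close> were a landmark, its distance from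
  \<open>i\<close> would be \<open>1\<close> in exactly one of them. In the graph containing the edge, the distances of
  \<open>i\<close> and \<open>j\<close> to any landmark differ by at most one; since \<open>R\<close> resolves, they differ for some
  landmark, so \<open>\<Delta>\<^sub>i\<^sub>j = 1\<close>.\<close>

lemma walk_len_0_iff: "walk_len E u v 0 \<longleftrightarrow> u = v"
  by (simp add: walk_len_def)

lemma walk_len_Suc_0_iff: "walk_len E u v (Suc 0) \<longleftrightarrow> {u, v} \<in> E"
  by (simp add: walk_len_def adj_rel_def)

lemma walk_len_add: "walk_len E u v m \<Longrightarrow> walk_len E v w n \<Longrightarrow> walk_len E u w (m + n)"
  unfolding walk_len_def by (auto simp: relpow_add)

lemma walk_len_dist: "\<exists>n. walk_len E u v n \<Longrightarrow> walk_len E u v (dist E u v)"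
  unfolding dist_def by (rule LeastI_ex)

lemma dist_le_walk_len: "walk_len E u v n \<Longrightarrow> dist E u v \<le> n"
  unfolding dist_def by (rule Least_le)

lemma edist_eq_enat_iff: "edist E u v = enat n \<longleftrightarrow> (\<exists>k. walk_len E u v k) \<and> dist E u v = n"
  by (simp add: edist_def)

lemma edist_connected_graph:
  "connected_graph V E \<Longrightarrow> u \<in> V \<Longrightarrow> v \<in> V \<Longrightarrow> edist E u v = enat (dist E u v)"
  by (simp add: edist_def connected_graph_def)

lemma edist_eq_1_iff: "edist E u v = enat 1 \<longleftrightarrow> u \<noteq> v \<and> {u, v} \<in> E"
proof
  assume "edist E u v = enat 1"
  then have walk: "\<exists>k. walk_len E u v k" and d: "dist E u v = 1"
    by (simp_all add: edist_eq_enat_iff)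
  from walk_len_dist[OF walk] d have "{u, v} \<in> E"
    by (simp add: walk_len_Suc_0_iff)
  moreover have "u \<noteq> v"
    using dist_le_walk_len[of E u v 0] d by (auto simp: walk_len_0_iff)
  ultimately show "u \<noteq> v \<and> {u, v} \<in> E" by simp
next
  assume uv: "u \<noteq> v \<and> {u, v} \<in> E"
  then have walk: "walk_len E u v (Suc 0)"
    by (simp add: walk_len_Suc_0_iff)
  then have "dist E u v \<le> 1"
    by (auto dest: dist_le_walk_len)
  moreover have "dist E u v \<noteq> 0"
    using walk_len_dist[of E u v] walk uv by (metis walk_len_0_iff)
  ultimately show "edist E u v = enat 1"
    using walk by (auto simp: edist_eq_enat_iff)
qed

lemma dist_adjacent_le_Suc:
  assumes "{i, j} \<in> E" and "\<exists>n. walk_len E j A n"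
  shows "dist E i A \<le> dist E j A + 1"
proof -
  have "walk_len E i j (Suc 0)"
    using assms(1) by (simp add: walk_len_Suc_0_iff)
  from walk_len_add[OF this walk_len_dist[OF assms(2)]] show ?thesis
    by (auto dest: dist_le_walk_len)
qed

lemma dist_adjacent_diff_le_1:
  assumes "{i, j} \<in> E" and "\<exists>n. walk_len E i A n" and "\<exists>n. walk_len E j A n"
  shows "\<bar>int (dist E i A) - int (dist E j A)\<bar> \<le> 1"
  using dist_adjacent_le_Suc[OF assms(1,3)]
    dist_adjacent_le_Suc[of j i E A] assms(1,2) by (simp add: insert_commute)

lemma Delta_eq_1:
  assumes "finite M" and "dvec E M i \<noteq> dvec E M j"
    and "\<forall>A\<in>M. \<bar>int (dist E i A) - int (dist E j A)\<bar> \<le> 1"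
  shows "Delta E M i j = 1"
proof -
  obtain A where A: "A \<in> M" "dist E i A \<noteq> dist E j A"
    using assms(2) unfolding dvec_def by (metis (full_types))
  let ?D = "(\<lambda>A. nat \<bar>int (dist E i A) - int (dist E j A)\<bar>) ` M"
  have "Max ?D \<le> 1"
    using assms(1,3) A(1) by (subst Max_le_iff) auto
  moreover have "1 \<le> Max ?D"
    using assms(1) A by (subst Max_ge_iff) (auto intro!: bexI[of _ A])
  ultimately show ?thesis
    unfolding Delta_def by simp
qed

lemma landmark_not_toggled:
  assumes "\<forall>x\<in>V. \<forall>A\<in>M. edist E1 x A = edist E2 x A"
    and "{i, j} \<in> E1 \<longleftrightarrow> {i, j} \<notin> E2"
    and "i \<in> V" and "i \<noteq> j"
  shows "j \<notin> M"
proof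
  assume "j \<in> M"
  then have "edist E1 i j = edist E2 i j"
    using assms(1,3) by blast
  then show False
    using assms(2,4) edist_eq_1_iff[of E1 i j] edist_eq_1_iff[of E2 i j] by auto
qed

lemma toggled_pair_of_resolution_set:
  assumes conn: "connected_graph V E" and res: "resolution_set V E M"
    and "i \<in> V" and "j \<in> V" and "i \<noteq> j"
    and agree1: "\<forall>x\<in>V. \<forall>A\<in>M. edist E1 x A = edist E x A"
    and agree2: "\<forall>x\<in>V. \<forall>A\<in>M. edist E2 x A = edist E x A"
    and toggled: "{i, j} \<in> E1 \<longleftrightarrow> {i, j} \<notin> E2"
  shows "i \<notin> M \<and> j \<notin> M \<and> Delta E M i j = 1"
proof -
  have MV: "M \<subseteq> V" and inj: "inj_on (dvec E M) V"
    using res by (auto simp: resolution_set_def)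
  have agree: "\<forall>x\<in>V. \<forall>A\<in>M. edist E1 x A = edist E2 x A"
    using agree1 agree2 by simp
  have "j \<notin> M"
    using landmark_not_toggled[OF agree toggled] assms(3,5) .
  moreover have "i \<notin> M"
    using landmark_not_toggled[OF agree _ assms(4)] toggled assms(5) by (simp add: insert_commute)
  moreover have "Delta E M i j = 1"
  proof (rule Delta_eq_1)
    show "finite M"
      using MV conn by (auto simp: connected_graph_def simple_graph_def intro: finite_subset)
    show "dvec E M i \<noteq> dvec E M j"
      using inj assms(3-5) by (auto dest: inj_onD)
    obtain F where F: "{i, j} \<in> F" "\<forall>x\<in>V. \<forall>A\<in>M. edist F x A = edist E x A"
      using toggled agree1 agree2 by blast
    show "\<forall>A\<in>M. \<bar>int (dist E i A) - int (dist E j A)\<bar> \<le> 1"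
    proof
      fix A assume "A \<in> M"
      then have "edist F x A = enat (dist E x A)" if "x \<in> V" for x
        using F(2) MV that edist_connected_graph[OF conn] by auto
      then have "(\<exists>n. walk_len F x A n) \<and> dist F x A = dist E x A" if "x \<in> V" for x
        using that by (simp add: edist_eq_enat_iff)
      with dist_adjacent_diff_le_1[OF F(1)] assms(3,4)
      show "\<bar>int (dist E i A) - int (dist E j A)\<bar> \<le> 1"
        by metis
    qed
  qed
  ultimately show ?thesis
    by blast
qed

lemma mem_toggle_iff: "{i, j} \<in> toggle E i j \<longleftrightarrow> {i, j} \<notin> E"
  by (simp add: toggle_def)

theorem lemma2:
  fixes V :: "'a set" and E :: "'a set set" and R :: "'a set" and i j :: 'a
  assumes "connected_graph V E"
    and "resolution_set V E R"
    and "i \<in> V" and "j \<in> V" and "i \<noteq> j"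
  shows "(invisible V E R i j \<longrightarrow> i \<notin> R \<and> j \<notin> R \<and> Delta E R i j = 1)
       \<and> (ambiguous V E R i j \<longrightarrow> i \<notin> R \<and> j \<notin> R \<and> Delta E R i j = 1)"
proof (rule conjI; rule impI)
  assume "invisible V E R i j"
  then show "i \<notin> R \<and> j \<notin> R \<and> Delta E R i j = 1"
    unfolding invisible_def
    by (intro toggled_pair_of_resolution_set[OF assms, of "toggle E i j" E])
      (simp_all add: mem_toggle_iff)
next
  assume "ambiguous V E R i j"
  then obtain E1 E2 where "connected_graph V E1" "connected_graph V E2"
    and "\<forall>x\<in>V. \<forall>A\<in>R. dist E1 x A = dist E x A" "\<forall>x\<in>V. \<forall>A\<in>R. dist E2 x A = dist E x A"
    and "{i, j} \<in> E1" "{i, j} \<notin> E2"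
    unfolding ambiguous_def by blast
  moreover have "\<forall>x\<in>V. \<forall>A\<in>R. edist F x A = edist E x A"
    if "connected_graph V F" and "\<forall>x\<in>V. \<forall>A\<in>R. dist F x A = dist E x A" for F
  proof (intro ballI)
    fix x A assume "x \<in> V" "A \<in> R"
    moreover have "A \<in> V"
      using \<open>A \<in> R\<close> assms(2) by (auto simp: resolution_set_def)
    ultimately show "edist F x A = edist E x A"
      using that edist_connected_graph[OF that(1)] edist_connected_graph[OF assms(1)] by simp
  qed
  ultimately show "i \<notin> R \<and> j \<notin> R \<and> Delta E R i j = 1"
    using toggled_pair_of_resolution_set[OF assms, of E1 E2] by blast
qed

end
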